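(* Let $\Lambda=\{z\in\mathbb C:\ \operatorname{Im} z>0\}$ with the measure $d\mu(z)=\frac{da\,db}{4b^2}$ for $z=a+ib$. For $\tau\in\mathbb C$, $z\in\Lambda$, $x\in\mathbb R$ put $$K(\tau;z,x)=\left(\frac{2i(x-z)(x-\overline z)}{z-\overline z}\right)^{\tau}$$ (the base is a positive real number, and the principal branch of the power is used), and for $f\in C_c^\infty(\Lambda)$ define the Fourier transform $$Jf(\tau;x)=\int_\Lambda K(\tau;z,x)\,f(z)\,d\mu(z),\qquad \tau\in\mathbb C,\ x\in\mathbb R .$$ For a function $\Phi(\tau;x)$ on $\mathbb C\times\mathbb R$ let $T_+\Phi(\tau;x)=\Phi(\tau+1;x)$ and $T_-\Phi(\tau;x)=\Phi(\tau-1;x)$; in an expression $c(\tau)\,x^p\frac{\partial^q}{\partial x^q}T_\pm$ the shift is applied first and then the result is differentiated in $x$ and multiplied by $x^p c(\tau)$. Let $\frac{\partial}{\partial z}=\frac12\bigl(\frac{\partial}{\partial a}-i\frac{\partial}{\partial b}\bigr)$, $\frac{\partial}{\partial \overline z}=\frac12\bigl(\frac{\partial}{\partial a}+i\frac{\partial}{\partial b}\bigr)$ be the Wirtinger derivatives. Then for every $f\in C_c^\infty(\Lambda)$, every $\tau\in\mathbb C\setminus\{-1,-\tfrac12\}$ and every $x\in\mathbb R$ the following identities hold: $$J\Bigl(\tfrac{1}{z-\overline z}f\Bigr)=\Bigl[\tfrac{1}{4i(1+\tau)(1+2\tau)}\tfrac{\partial^2}{\partial x^2}T_+-\tfrac{2i\tau}{2(1+2\tau)}T_-\Bigr]Jf;$$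 $$J\Bigl(\bigl(\tfrac{\partial}{\partial z}-\tfrac{\partial}{\partial\overline z}\bigr)f\Bigr)=\Bigl[\tfrac{2+\tau}{2i(1+\tau)(1+2\tau)}\tfrac{\partial^2}{\partial x^2}T_++\tfrac{2i\tau(-1+\tau)}{1+2\tau}T_-\Bigr]Jf;$$ $$J\Bigl(\bigl(z\tfrac{\partial}{\partial z}-\overline z\tfrac{\partial}{\partial\overline z}\bigr)f\Bigr)=\Bigl[\tfrac{2+\tau}{2i(1+\tau)(1+2\tau)}x\tfrac{\partial^2}{\partial x^2}T_+-\tfrac{2+\tau}{2i(1+\tau)}\tfrac{\partial}{\partial x}T_++\tfrac{2i(-1+\tau)\tau}{1+2\tau}xT_-\Bigr]Jf;$$ $$J\Bigl(\bigl(z^2\tfrac{\partial}{\partial z}-\overline z^{\,2}\tfrac{\partial}{\partial\overline z}\bigr)f\Bigr)=\Bigl[\tfrac{2+\tau}{2i(1+\tau)(1+2\tau)}x^2\tfrac{\partial^2}{\partial x^2}T_+-\tfrac{2(2+\tau)}{2i(1+\tau)}x\tfrac{\partial}{\partial x}T_++\tfrac{2(2+\tau)}{2i}T_++\tfrac{2i\tau(-1+\tau)}{1+2\tau}x^2T_-\Bigr]Jf,$$ where both sides are evaluated at $(\tau;x)$.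
   Context: $\Lambda$ is the Lobachevsky (hyperbolic) plane realized as the upper half-plane; $\mu$ is the $\mathrm{SL}(2,\mathbb R)$-invariant measure on it. $C_c^\infty(\Lambda)$ denotes smooth compactly supported functions on $\Lambda$. The operator $\frac1{z-\overline z}$ denotes multiplication by the function $z\mapsto \frac1{z-\overline z}$. *)

theory Defs
  imports "HOL-Analysis.Analysis"
begin

definition Lobachevsky :: "complex set" where
  "Lobachevsky = {z. Im z > 0}"

definition d_a :: "(complex \<Rightarrow> complex) \<Rightarrow> complex \<Rightarrow> complex" where
  "d_a f z = vector_derivative (\<lambda>t::real. f (z + of_real t)) (at 0)"

definition d_b :: "(complex \<Rightarrow> complex) \<Rightarrow> complex \<Rightarrow> complex" where
  "d_b f z = vector_derivative (\<lambda>t::real. f (z + \<i> * of_real t)) (at 0)"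

definition wirt_z :: "(complex \<Rightarrow> complex) \<Rightarrow> complex \<Rightarrow> complex" where
  "wirt_z f z = (d_a f z - \<i> * d_b f z) / 2"

definition wirt_zbar :: "(complex \<Rightarrow> complex) \<Rightarrow> complex \<Rightarrow> complex" where
  "wirt_zbar f z = (d_a f z + \<i> * d_b f z) / 2"

text \<open>Smooth (C-infinity) functions on an open set S, regarding C as R^2:
  the greatest class of functions that are (real, Frechet) differentiable at
  every point of S, continuous on S, and whose two partial derivatives again
  belong to the class.\<close>
coinductive smooth_on :: "complex set \<Rightarrow> (complex \<Rightarrow> complex) \<Rightarrow> bool" where
  "\<lbrakk> continuous_on S f;
     \<And>z. z \<in> S \<Longrightarrow> (f has_derivative D z) (at z);
     smooth_on S (\<lambda>z. D z 1);
     smooth_on S (\<lambda>z. D z \<i>) \<rbrakk> \<Longrightarrow> smooth_on S f"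

text \<open>C_c^infinity(Lambda): smooth on Lambda, support compact and contained in Lambda
  (the function is extended by zero outside Lambda).\<close>
definition Cc_inf_Lob :: "(complex \<Rightarrow> complex) \<Rightarrow> bool" where
  "Cc_inf_Lob f \<longleftrightarrow> smooth_on Lobachevsky f \<and>
     compact (closure {z. f z \<noteq> 0}) \<and> closure {z. f z \<noteq> 0} \<subseteq> Lobachevsky"

definition kernelK :: "complex \<Rightarrow> complex \<Rightarrow> real \<Rightarrow> complex" where
  "kernelK \<tau> z x =
     (2 * \<i> * (of_real x - z) * (of_real x - cnj z) / (z - cnj z)) powr \<tau>"

definition fourierJ :: "(complex \<Rightarrow> complex) \<Rightarrow> complex \<Rightarrow> real \<Rightarrow> complex" where
  "fourierJ f \<tau> x =
     set_lebesgue_integral lborel Lobachevsky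
       (\<lambda>z. kernelK \<tau> z x * f z / (4 * (of_real (Im z))\<^sup>2))"

definition Tplus :: "(complex \<Rightarrow> real \<Rightarrow> complex) \<Rightarrow> complex \<Rightarrow> real \<Rightarrow> complex" where
  "Tplus \<Phi> \<tau> x = \<Phi> (\<tau> + 1) x"

definition Tminus :: "(complex \<Rightarrow> real \<Rightarrow> complex) \<Rightarrow> complex \<Rightarrow> real \<Rightarrow> complex" where
  "Tminus \<Phi> \<tau> x = \<Phi> (\<tau> - 1) x"

definition dx :: "(complex \<Rightarrow> real \<Rightarrow> complex) \<Rightarrow> complex \<Rightarrow> real \<Rightarrow> complex" where
  "dx \<Phi> \<tau> x = vector_derivative (\<lambda>y. \<Phi> \<tau> y) (at x)"

end

theory Submission
  imports Defs
begin

(* On the upper half-plane the kernel is a real power, K(\<tau>; z, x) = P^\<tau> with P = |x - z|^2 / Im z.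
   Shifting \<tau> by 1 multiplies or divides it by P, and its derivatives in x, Re z and Im z are
   P^(\<tau> - 1) times rational functions.  Differentiating under the integral sign, the right-hand
   sides become integrals of f against explicit kernels.  On the left,
   (\<phi> d/dz - cnj \<phi> d/dzbar) f = \<i> (Im \<phi> d/da - Re \<phi> d/db) f, and as f has compact support in
   the half-plane, integration by parts moves these derivatives onto the kernel.  Each identity
   thereby reduces to a pointwise identity between kernels; the three vector-field identities are
   the cases \<phi> = 1, z, z^2 of a single one for real quadratic \<phi>. *)

section \<open>Compactly supported integrands\<close>

lemma continuous_on_UNIV_vanishing_outside:
  fixes h :: "'a::topological_space \<Rightarrow> 'b::{topological_space,zero}"
  assumes "open A" "closed S" "S \<subseteq> A" "continuous_on A h" "\<And>z. z \<notin> S \<Longrightarrow> h z = 0"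
  shows "continuous_on UNIV h"
proof -
  have "continuous_on (- S) h"
    by (rule continuous_on_eq[OF continuous_on_const]) (use assms(5) in auto)
  then have "continuous_on (A \<union> - S) h"
    using assms by (intro continuous_on_open_Un) auto
  moreover have "A \<union> - S = UNIV"
    using assms(3) by auto
  ultimately show ?thesis
    by simp
qed

lemma continuous_on_UNIV_mult_vanishing_outside:
  fixes k h :: "'a::topological_space \<Rightarrow> 'b::real_normed_algebra"
  assumes "open A" "closed S" "S \<subseteq> A" "continuous_on A k" "continuous_on UNIV h"
    and "\<And>z. z \<notin> S \<Longrightarrow> h z = 0"
  shows "continuous_on UNIV (\<lambda>z. k z * h z)"
  using assms
  by (intro continuous_on_UNIV_vanishing_outside[OF assms(1-3)])
    (auto intro!: continuous_intros intro: continuous_on_subset)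

lemma continuous_on_slice:
  "continuous_on (UNIV \<times> A) (\<lambda>(x, z). F x z) \<Longrightarrow> continuous_on A (F x)"
  by (rule continuous_on_compose2[of _ "\<lambda>(x, z). F x z" _ "\<lambda>z. (x, z)", simplified])
    (auto intro!: continuous_intros)

lemma has_derivative_vanishing_outside:
  assumes "closed S" "\<And>z. z \<notin> S \<Longrightarrow> g z = 0" "z \<notin> S"
  shows "(g has_derivative (\<lambda>_. 0)) (at z)"
  using assms by (intro has_derivative_transform_within_open[OF has_derivative_const, of "- S"]) auto

lemma has_vector_derivative_line_vanishing_outside:
  fixes G :: "'a::real_normed_vector \<Rightarrow> 'b::real_normed_vector"
  assumes "closed S" "\<And>z. z \<notin> S \<Longrightarrow> G z = 0" "z \<notin> S"
  shows "((\<lambda>t. G (z + t *\<^sub>R v)) has_vector_derivative 0) (at 0)"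
proof (rule has_vector_derivative_transform_within_open[OF has_vector_derivative_const])
  show "open ((\<lambda>t. z + t *\<^sub>R v) -` (- S))"
    using assms(1) by (intro continuous_open_vimage) (auto intro!: continuous_intros)
qed (use assms in auto)

lemma has_vector_derivative_line_shift:
  fixes G :: "'a::real_normed_vector \<Rightarrow> 'b::real_normed_vector"
  assumes "\<And>z. ((\<lambda>t. G (z + t *\<^sub>R v)) has_vector_derivative dG z) (at 0)"
  shows "((\<lambda>t. G (z + t *\<^sub>R v)) has_vector_derivative dG (z + s *\<^sub>R v)) (at s)"
proof -
  have "((\<lambda>t. G ((z + s *\<^sub>R v) + t *\<^sub>R v)) \<circ> (\<lambda>t. t - s) has_vector_derivative
      1 *\<^sub>R dG (z + s *\<^sub>R v)) (at s)"
    by (rule vector_diff_chain_at) (auto intro!: derivative_eq_intros assms)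
  then show ?thesis
    by (simp add: o_def algebra_simps)
qed

lemma integral_UNIV_vanishing_outside:
  fixes G :: "'a::euclidean_space \<Rightarrow> 'b::banach"
  assumes "\<And>z. z \<notin> X \<Longrightarrow> G z = 0"
  shows "integral UNIV G = integral X G"
proof -
  have "(\<lambda>z. if z \<in> X then G z else 0) = G"
    using assms by auto
  then show ?thesis
    using integral_restrict_UNIV[of X G] by simp
qed

lemma integral_cbox_translate:
  fixes G :: "'a::euclidean_space \<Rightarrow> 'b::banach"
  assumes "\<And>z. z \<notin> cbox (c + a) (c + b) \<Longrightarrow> G z = 0"
  shows "integral (cbox a b) (\<lambda>z. G (z + c)) = integral UNIV G"
  using integral_shift_cbox[of "c + a" c "c + b" G]
    integral_UNIV_vanishing_outside[where X = "cbox (c + a) (c + b)" and G = G, OF assms]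
  by simp

lemma integrable_on_UNIV_compact_support:
  fixes G :: "'a::euclidean_space \<Rightarrow> 'b::banach"
  assumes "continuous_on UNIV G" "compact S" "\<And>z. z \<notin> S \<Longrightarrow> G z = 0"
  shows "G integrable_on UNIV"
proof -
  obtain c where "S \<subseteq> cbox (- c) c"
    using bounded_subset_cbox_symmetric[OF compact_imp_bounded[OF assms(2)]] .
  moreover have "G integrable_on cbox (- c) c"
    by (rule integrable_continuous[OF continuous_on_subset[OF assms(1)]]) simp
  ultimately show ?thesis
    using assms(3) by (auto intro: integrable_on_superset[of G "cbox (- c) c"])
qed

lemma integral_cbox_translate_along_line:
  fixes G :: "'a::euclidean_space \<Rightarrow> 'b::banach"
  assumes box: "\<And>z t. z \<in> S \<Longrightarrow> \<bar>t\<bar> \<le> 1 \<Longrightarrow> z - t *\<^sub>R v \<in> cbox (- c) c"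
    and G0: "\<And>z. z \<notin> S \<Longrightarrow> G z = 0" and t: "\<bar>t\<bar> \<le> 1"
  shows "integral (cbox (- c) c) (\<lambda>z. G (z + t *\<^sub>R v)) = integral UNIV G"
proof (rule integral_cbox_translate)
  fix z
  assume z: "z \<notin> cbox (t *\<^sub>R v + - c) (t *\<^sub>R v + c)"
  have "z - t *\<^sub>R v \<notin> cbox (- c) c"
  proof
    assume "z - t *\<^sub>R v \<in> cbox (- c) c"
    then have "t *\<^sub>R v + (z - t *\<^sub>R v) \<in> cbox (t *\<^sub>R v + - c) (t *\<^sub>R v + c)"
      unfolding cbox_translation by (rule imageI)
    with z show False
      by simp
  qed
  then show "G z = 0"
    using box[of z t] G0 t by blast
qed

(* The translates G(z + t v), |t| \<le> 1, are all supported in one box, so their integrals over it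
   do not depend on t; differentiating in t at 0 shows that dG integrates to 0. *)
lemma has_integral_directional_derivative_eq_0:
  fixes G dG :: "'a::euclidean_space \<Rightarrow> 'b::banach"
  assumes S: "compact S" and G0: "\<And>z. z \<notin> S \<Longrightarrow> G z = 0" and Gc: "continuous_on UNIV G"
    and G': "\<And>z. ((\<lambda>t. G (z + t *\<^sub>R v)) has_vector_derivative dG z) (at 0)"
    and dGc: "continuous_on UNIV dG"
  shows "(dG has_integral 0) UNIV"
proof -
  have "compact ((\<lambda>p. fst p - snd p *\<^sub>R v) ` (S \<times> {-1..1}))"
    by (intro compact_continuous_image compact_Times S compact_Icc continuous_intros)
  then obtain c where "(\<lambda>p. fst p - snd p *\<^sub>R v) ` (S \<times> {-1..1}) \<subseteq> cbox (- c) c"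
    using bounded_subset_cbox_symmetric[OF compact_imp_bounded] by blast
  then have c: "z - t *\<^sub>R v \<in> cbox (- c) c" if "z \<in> S" "\<bar>t\<bar> \<le> 1" for z t
    using that by (force simp: abs_le_iff)
  have "((\<lambda>t. integral (cbox (- c) c) (\<lambda>z. G (z + t *\<^sub>R v))) has_vector_derivative
      integral (cbox (- c) c) (\<lambda>z. dG (z + 0 *\<^sub>R v))) (at 0 within UNIV)"
  proof (rule leibniz_rule_vector_derivative)
    show "(\<lambda>z. G (z + t *\<^sub>R v)) integrable_on cbox (- c) c" for t
      by (rule integrable_continuous, rule continuous_on_compose2[OF Gc]) (auto intro!: continuous_intros)
    show "continuous_on (UNIV \<times> cbox (- c) c) (\<lambda>(t, z). dG (z + t *\<^sub>R v))"
      unfolding split_beta by (rule continuous_on_compose2[OF dGc]) (auto intro!: continuous_intros)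
  qed (simp_all add: has_vector_derivative_line_shift[OF G'])
  then have "((\<lambda>t. integral (cbox (- c) c) (\<lambda>z. G (z + t *\<^sub>R v))) has_vector_derivative
      integral (cbox (- c) c) dG) (at 0)"
    by simp
  then have "((\<lambda>_. integral UNIV G) has_vector_derivative integral (cbox (- c) c) dG) (at 0)"
    by (rule has_vector_derivative_transform_within_open[of _ _ _ "ball 0 1"])
      (auto intro!: integral_cbox_translate_along_line[OF c G0])
  then have "integral (cbox (- c) c) dG = 0"
    using vector_derivative_unique_at has_vector_derivative_const by blast
  moreover have "(dG has_integral integral (cbox (- c) c) dG) (cbox (- c) c)"
    by (rule integrable_integral, rule integrable_continuous, rule continuous_on_subset[OF dGc]) simp
  moreover have "dG z = 0" if "z \<notin> cbox (- c) c" for z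
  proof -
    have "z \<notin> S"
      using c[of z 0] that by auto
    then show ?thesis
      using vector_derivative_unique_at[OF G' has_vector_derivative_line_vanishing_outside[where G = G,
            OF compact_imp_closed[OF S] G0]] by simp
  qed
  ultimately show ?thesis
    using has_integral_on_superset[of dG _ "cbox (- c) c" UNIV] by simp
qed

lemma has_vector_derivative_integral_compact_support:
  fixes F F' :: "real \<Rightarrow> 'a::euclidean_space \<Rightarrow> 'b::banach"
  assumes S: "compact S" and F0: "\<And>y z. z \<notin> S \<Longrightarrow> F y z = 0"
    and F': "\<And>y z. ((\<lambda>y. F y z) has_vector_derivative F' y z) (at y)"
    and Fc: "\<And>y. continuous_on UNIV (F y)" and F'c: "continuous_on UNIV (\<lambda>(y, z). F' y z)"
  shows "((\<lambda>y. integral UNIV (F y)) has_vector_derivative integral UNIV (F' y)) (at y)"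
proof -
  obtain c where c: "S \<subseteq> cbox (- c) c"
    using bounded_subset_cbox_symmetric[OF compact_imp_bounded[OF S]] .
  have F'0: "F' y z = 0" if "z \<notin> S" for y z
    using vector_derivative_unique_at[OF F'[where y=y and z=z]] F0[OF that] has_vector_derivative_const
    by simp
  have "((\<lambda>y. integral (cbox (- c) c) (F y)) has_vector_derivative integral (cbox (- c) c) (F' y))
      (at y within UNIV)"
  proof (rule leibniz_rule_vector_derivative)
    show "F y integrable_on cbox (- c) c" for y
      by (rule integrable_continuous[OF continuous_on_subset[OF Fc]]) simp
    show "continuous_on (UNIV \<times> cbox (- c) c) (\<lambda>(y, z). F' y z)"
      by (rule continuous_on_subset[OF F'c]) simp
  qed (simp_all add: F')
  moreover have "integral UNIV (G :: 'a \<Rightarrow> 'b) = integral (cbox (- c) c) G"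
    if "\<And>z. z \<notin> S \<Longrightarrow> G z = 0" for G
    using c that by (intro integral_UNIV_vanishing_outside) auto
  ultimately show ?thesis
    using F0 F'0 by simp
qed

lemma has_integral_kernel_add:
  fixes g :: "'a::euclidean_space \<Rightarrow> 'b::real_normed_algebra"
  shows "((\<lambda>z. L1 z * g z) has_integral I1) S \<Longrightarrow> ((\<lambda>z. L2 z * g z) has_integral I2) S \<Longrightarrow>
    ((\<lambda>z. (L1 z + L2 z) * g z) has_integral I1 + I2) S"
  by (simp add: distrib_right has_integral_add)

lemma has_integral_kernel_diff:
  fixes g :: "'a::euclidean_space \<Rightarrow> 'b::real_normed_algebra"
  shows "((\<lambda>z. L1 z * g z) has_integral I1) S \<Longrightarrow> ((\<lambda>z. L2 z * g z) has_integral I2) S \<Longrightarrow>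
    ((\<lambda>z. (L1 z - L2 z) * g z) has_integral I1 - I2) S"
  by (simp add: left_diff_distrib has_integral_diff)

lemma has_integral_kernel_scale:
  fixes g :: "'a::euclidean_space \<Rightarrow> 'b::real_normed_algebra"
  shows "((\<lambda>z. L z * g z) has_integral I) S \<Longrightarrow> ((\<lambda>z. (c * L z) * g z) has_integral c * I) S"
  by (simp add: mult.assoc has_integral_mult_right)

section \<open>The kernel on the upper half-plane\<close>

lemma open_Lobachevsky: "open Lobachevsky"
  unfolding Lobachevsky_def by (rule open_halfspace_Im_gt)

lemma has_vector_derivative_powr_of_real:
  fixes s :: complex
  assumes "(g has_real_derivative g') (at t)" and "g t > 0"
  shows "((\<lambda>t. of_real (g t) powr s) has_vector_derivative s * of_real (g t) powr (s - 1) * of_real g') (at t)"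
proof -
  have "((\<lambda>w. w powr s) has_field_derivative s * of_real (g t) powr (s - 1)) (at (of_real (g t)))"
    using assms(2) by (intro has_field_derivative_powr) (simp add: nonpos_Reals_def)
  from field_vector_diff_chain_at[OF has_vector_derivative_of_real[OF assms(1)] this]
  show ?thesis
    by (simp add: o_def mult.commute)
qed

lemma wirtinger_combination:
  "w * wirt_z g z - cnj w * wirt_zbar g z = \<i> * (of_real (Im w) * d_a g z - of_real (Re w) * d_b g z)"
proof -
  have "w * wirt_z g z - cnj w * wirt_zbar g z = ((w - cnj w) * d_a g z - \<i> * (w + cnj w) * d_b g z) / 2"
    by (simp add: wirt_z_def wirt_zbar_def field_simps)
  also have "\<dots> = \<i> * (of_real (Im w) * d_a g z - of_real (Re w) * d_b g z)"
    by (simp add: complex_diff_cnj complex_add_cnj field_simps)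
  finally show ?thesis .
qed

lemma dx_Tplus: "dx (Tplus \<Phi>) = Tplus (dx \<Phi>)"
  by (simp add: dx_def Tplus_def fun_eq_iff)

definition lob_base :: "complex \<Rightarrow> real \<Rightarrow> real" where
  "lob_base z x = ((x - Re z)\<^sup>2 + (Im z)\<^sup>2) / Im z"

lemma lob_base_pos: "Im z > 0 \<Longrightarrow> lob_base z x > 0"
  unfolding lob_base_def by (simp add: add_nonneg_pos)

lemma kernelK_eq_powr:
  assumes "Im z > 0"
  shows "kernelK s z x = of_real (lob_base z x) powr s"
proof -
  have "2 * \<i> * (of_real x - z) * (of_real x - cnj z) = 2 * \<i> * of_real ((x - Re z)\<^sup>2 + (Im z)\<^sup>2)"
    by (simp add: complex_eq_iff power2_eq_square algebra_simps)
  moreover have "z - cnj z = 2 * \<i> * of_real (Im z)"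
    by (simp add: complex_eq_iff)
  ultimately show ?thesis
    using assms by (simp add: kernelK_def lob_base_def)
qed

lemma lob_base_has_real_derivative_x:
  "Im z > 0 \<Longrightarrow> ((\<lambda>y. lob_base z y) has_real_derivative 2 * (x - Re z) / Im z) (at x)"
  unfolding lob_base_def by (auto intro!: derivative_eq_intros simp: power2_eq_square field_simps)

lemma lob_base_has_real_derivative_Re:
  "Im z > 0 \<Longrightarrow> ((\<lambda>t. lob_base (z + of_real t) x) has_real_derivative - 2 * (x - Re z) / Im z) (at 0)"
  unfolding lob_base_def by (auto intro!: derivative_eq_intros simp: power2_eq_square field_simps)

lemma lob_base_has_real_derivative_Im:
  "Im z > 0 \<Longrightarrow>
    ((\<lambda>t. lob_base (z + of_real t * \<i>) x) has_real_derivative 1 - ((x - Re z) / Im z)\<^sup>2) (at 0)"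
  unfolding lob_base_def by (auto intro!: derivative_eq_intros simp: power2_eq_square field_simps)

lemma continuous_on_lob_base:
  "continuous_on (UNIV \<times> Lobachevsky) (\<lambda>(x, z). lob_base z x)"
  unfolding lob_base_def Lobachevsky_def split_beta
  by (intro continuous_intros) auto

lemma continuous_on_lob_base_powr:
  fixes s :: complex
  shows "continuous_on (UNIV \<times> Lobachevsky) (\<lambda>(x, z). of_real (lob_base z x) powr s)"
  unfolding split_beta
proof (rule continuous_on_powr_complex)
  show "continuous_on (UNIV \<times> Lobachevsky) (\<lambda>p. of_real (lob_base (snd p) (fst p)) :: complex)"
    using continuous_on_lob_base unfolding split_beta by (rule continuous_on_of_real)
qed (auto simp: Lobachevsky_def less_imp_le[OF lob_base_pos], metis less_irrefl lob_base_pos)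

(* The integrand of fourierJ on the half-plane: the kernel times the density 1/(4 Im\<^sup>2 z) of \<mu>. *)
definition lob_kernel :: "complex \<Rightarrow> complex \<Rightarrow> real \<Rightarrow> complex" where
  "lob_kernel s z x = of_real (lob_base z x) powr s / (4 * (of_real (Im z))\<^sup>2)"

definition lob_kernel_dx :: "complex \<Rightarrow> complex \<Rightarrow> real \<Rightarrow> complex" where
  "lob_kernel_dx s z x =
     s * of_real (lob_base z x) powr (s - 1) * of_real (2 * (x - Re z) / Im z) / (4 * (of_real (Im z))\<^sup>2)"

definition lob_kernel_dxx :: "complex \<Rightarrow> complex \<Rightarrow> real \<Rightarrow> complex" where
  "lob_kernel_dxx s z x =
     s * ((s - 1) * of_real (lob_base z x) powr (s - 2) * (of_real (2 * (x - Re z) / Im z))\<^sup>2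
          + of_real (lob_base z x) powr (s - 1) * of_real (2 / Im z)) / (4 * (of_real (Im z))\<^sup>2)"

lemma has_vector_derivative_lob_kernel:
  assumes "Im z > 0"
  shows "((\<lambda>y. lob_kernel s z y) has_vector_derivative lob_kernel_dx s z x) (at x)"
  unfolding lob_kernel_def lob_kernel_dx_def
  by (intro has_vector_derivative_divide has_vector_derivative_powr_of_real
      lob_base_has_real_derivative_x lob_base_pos assms)

lemma has_vector_derivative_lob_kernel_dx:
  assumes "Im z > 0"
  shows "((\<lambda>y. lob_kernel_dx s z y) has_vector_derivative lob_kernel_dxx s z x) (at x)"
proof -
  have "((\<lambda>y. of_real (lob_base z y) powr (s - 1)) has_vector_derivative
      (s - 1) * of_real (lob_base z x) powr (s - 2) * of_real (2 * (x - Re z) / Im z)) (at x)"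
    using has_vector_derivative_powr_of_real[OF lob_base_has_real_derivative_x[OF assms] lob_base_pos[OF assms],
        of "s - 1"]
    by (simp add: diff_diff_eq)
  moreover have "((\<lambda>y. of_real (2 * (y - Re z) / Im z) :: complex) has_vector_derivative of_real (2 / Im z)) (at x)"
    by (auto intro!: derivative_eq_intros)
  ultimately have "((\<lambda>y. s * of_real (lob_base z y) powr (s - 1) * of_real (2 * (y - Re z) / Im z)
      / (4 * (of_real (Im z))\<^sup>2)) has_vector_derivative
      (s * of_real (lob_base z x) powr (s - 1) * of_real (2 / Im z)
       + s * ((s - 1) * of_real (lob_base z x) powr (s - 2) * of_real (2 * (x - Re z) / Im z))
         * of_real (2 * (x - Re z) / Im z)) / (4 * (of_real (Im z))\<^sup>2)) (at x)"
    by (intro has_vector_derivative_divide has_vector_derivative_mult has_vector_derivative_mult_right)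
  then show ?thesis
    unfolding lob_kernel_dx_def
    by (rule has_vector_derivative_eq_rhs)
      (simp add: lob_kernel_dxx_def power2_eq_square algebra_simps del: of_real_mult of_real_divide of_real_diff)
qed

lemma continuous_on_lob_kernel:
  "continuous_on (UNIV \<times> Lobachevsky) (\<lambda>(x, z). lob_kernel s z x)"
  "continuous_on (UNIV \<times> Lobachevsky) (\<lambda>(x, z). lob_kernel_dx s z x)"
  "continuous_on (UNIV \<times> Lobachevsky) (\<lambda>(x, z). lob_kernel_dxx s z x)"
  unfolding lob_kernel_def lob_kernel_dx_def lob_kernel_dxx_def split_beta
  by (intro continuous_on_lob_base_powr[unfolded split_beta] continuous_intros; auto simp: Lobachevsky_def)+

lemma has_integral_fourierJ:
  assumes hc: "continuous_on UNIV h" and S: "compact S" "S \<subseteq> Lobachevsky"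
    and h0: "\<And>z. z \<notin> S \<Longrightarrow> h z = 0"
  shows "((\<lambda>z. lob_kernel s z x * h z) has_integral fourierJ h s x) UNIV"
proof -
  define G where "G z = lob_kernel s z x * h z" for z
  have "continuous_on UNIV G"
    unfolding G_def using open_Lobachevsky compact_imp_closed[OF S(1)] S(2)
      continuous_on_slice[OF continuous_on_lob_kernel(1)] hc h0
    by (rule continuous_on_UNIV_mult_vanishing_outside)
  moreover have "(\<lambda>z. indicator S z *\<^sub>R G z) = G"
    using h0 by (auto simp: fun_eq_iff indicator_def G_def)
  ultimately have "integrable lborel G"
    using borel_integrable_compact[OF S(1), of G] continuous_on_subset[of UNIV G S] by simp
  moreover have "indicator Lobachevsky z *\<^sub>R (kernelK s z x * h z / (4 * (of_real (Im z))\<^sup>2)) = G z" for z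
  proof (cases "z \<in> Lobachevsky")
    case True
    then show ?thesis
      by (simp add: G_def lob_kernel_def kernelK_eq_powr Lobachevsky_def)
  next
    case False
    then show ?thesis
      using S(2) h0 by (auto simp: G_def)
  qed
  ultimately show ?thesis
    unfolding fourierJ_def set_lebesgue_integral_def G_def[symmetric]
    by (simp add: has_integral_integral_lborel)
qed

lemma lob_kernel_div_z_minus_cnj:
  assumes z: "Im z > 0" and \<tau>: "\<tau> \<noteq> -1" "\<tau> \<noteq> -1/2"
  shows "lob_kernel \<tau> z x / (z - cnj z) =
    1 / (4 * \<i> * (1 + \<tau>) * (1 + 2 * \<tau>)) * lob_kernel_dxx (\<tau> + 1) z x
    - 2 * \<i> * \<tau> / (2 * (1 + 2 * \<tau>)) * lob_kernel (\<tau> - 1) z x"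
proof -
  define P where "P = (of_real (lob_base z x) :: complex)"
  define E where "E = P powr (\<tau> - 1)"
  have P: "P = ((of_real x - of_real (Re z))\<^sup>2 + (of_real (Im z))\<^sup>2) / of_real (Im z)"
    by (simp add: P_def lob_base_def)
  have E: "P powr \<tau> = P * E" "P powr (\<tau> + 1 - 1) = P * E" "P powr (\<tau> + 1 - 2) = E"
    using powr_add[of P "\<tau> - 1" 1] by (simp_all add: E_def algebra_simps)
  (* algebra works in commutative rings: the denominators become inverses, passed with their
     defining equations *)
  have inv: "of_real (Im z) * inverse (of_real (Im z)) = (1::complex)"
    "(1 + \<tau>) * inverse (1 + \<tau>) = 1" "(1 + 2 * \<tau>) * inverse (1 + 2 * \<tau>) = 1"
    "2 * inverse 2 = (1::complex)" "4 * inverse 4 = (1::complex)"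
    using z \<tau> by (auto simp: add_eq_0_iff complex_eq_iff)
  have z_cnj: "z - cnj z = 2 * \<i> * of_real (Im z)"
    by (simp add: complex_eq_iff)
  show ?thesis
    unfolding lob_kernel_def lob_kernel_dxx_def P_def[symmetric] z_cnj
    unfolding E E_def[symmetric]
    unfolding P
    by (simp only: of_real_divide of_real_mult of_real_diff of_real_numeral of_real_inverse divide_inverse
        inverse_mult_distrib inverse_i power2_eq_square) (use inv in algebra)
qed

(* The left-hand side is -\<i> (\<partial>\<^sub>a(ma P\<^sup>\<tau>) + \<partial>\<^sub>b(mb P\<^sup>\<tau>)) for P = lob_base z x and the multipliers
   ma = Im \<phi> / (4 Im\<^sup>2 z), mb = - Re \<phi> / (4 Im\<^sup>2 z) produced by fourierJ_vector_field. *)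
lemma lob_kernel_quadratic_field:
  fixes \<alpha> \<beta> \<gamma> x :: real and z \<tau> :: complex
  assumes z: "Im z > 0" and \<tau>: "\<tau> \<noteq> -1" "\<tau> \<noteq> -1/2"
  defines "\<phi> \<equiv> \<lambda>w. of_real \<alpha> + of_real \<beta> * w + of_real \<gamma> * w\<^sup>2"
    and "P \<equiv> (of_real (lob_base z x) :: complex)"
  shows "- \<i> * ((of_real (\<gamma> / (2 * Im z)) * P powr \<tau>
            + \<tau> * of_real (Im (\<phi> z) / (4 * (Im z)\<^sup>2)) * P powr (\<tau> - 1) * of_real (- 2 * (x - Re z) / Im z))
          + (of_real ((\<alpha> + \<beta> * Re z + \<gamma> * (Re z)\<^sup>2) / (2 * (Im z) ^ 3)) * P powr \<tau>
            + \<tau> * of_real (- Re (\<phi> z) / (4 * (Im z)\<^sup>2)) * P powr (\<tau> - 1)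
              * of_real (1 - ((x - Re z) / Im z)\<^sup>2)))
    = (2 + \<tau>) / (2 * \<i> * (1 + \<tau>) * (1 + 2 * \<tau>)) * \<phi> (of_real x) * lob_kernel_dxx (\<tau> + 1) z x
      - (2 + \<tau>) / (2 * \<i> * (1 + \<tau>)) * (of_real \<beta> + 2 * of_real \<gamma> * of_real x) * lob_kernel_dx (\<tau> + 1) z x
      + (2 + \<tau>) / (2 * \<i>) * (2 * of_real \<gamma>) * lob_kernel (\<tau> + 1) z x
      + 2 * \<i> * \<tau> * (-1 + \<tau>) / (1 + 2 * \<tau>) * \<phi> (of_real x) * lob_kernel (\<tau> - 1) z x"
proof -
  define E where "E = P powr (\<tau> - 1)"
  have \<phi>: "Im (\<phi> z) / (4 * (Im z)\<^sup>2) = (\<beta> + 2 * \<gamma> * Re z) / (4 * Im z)"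
    "- Re (\<phi> z) / (4 * (Im z)\<^sup>2) = - (\<alpha> + \<beta> * Re z + \<gamma> * ((Re z)\<^sup>2 - (Im z)\<^sup>2)) / (4 * (Im z)\<^sup>2)"
    "\<phi> (of_real x) = of_real \<alpha> + of_real \<beta> * of_real x + of_real \<gamma> * (of_real x)\<^sup>2"
    using z by (simp_all add: \<phi>_def power2_eq_square field_simps)
  have P: "P = ((of_real x - of_real (Re z))\<^sup>2 + (of_real (Im z))\<^sup>2) / of_real (Im z)"
    by (simp add: P_def lob_base_def)
  have E: "P powr \<tau> = P * E" "P powr (\<tau> + 1) = P * (P * E)" "P powr (\<tau> + 1 - 1) = P * E"
    "P powr (\<tau> + 1 - 2) = E"
    using powr_add[of P "\<tau> - 1" 1] powr_add[of P \<tau> 1] by (simp_all add: E_def algebra_simps)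
  have inv: "of_real (Im z) * inverse (of_real (Im z)) = (1::complex)"
    "(1 + \<tau>) * inverse (1 + \<tau>) = 1" "(1 + 2 * \<tau>) * inverse (1 + 2 * \<tau>) = 1"
    "2 * inverse 2 = (1::complex)" "4 * inverse 4 = (1::complex)"
    using z \<tau> by (auto simp: add_eq_0_iff complex_eq_iff)
  show ?thesis
    unfolding lob_kernel_def lob_kernel_dx_def lob_kernel_dxx_def P_def[symmetric] \<phi>
    unfolding E E_def[symmetric]
    unfolding P
    by (simp only: of_real_divide of_real_mult of_real_diff of_real_add of_real_minus of_real_numeral
        of_real_inverse of_real_power of_real_1 divide_inverse inverse_mult_distrib inverse_i power2_eq_square
        power3_eq_cube) (use inv in algebra)
qed

section \<open>Test functions on the half-plane\<close>

locale lob_test_function =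
  fixes f :: "complex \<Rightarrow> complex" and S :: "complex set" and f' :: "complex \<Rightarrow> complex \<Rightarrow> complex"
  assumes compact_support: "compact S" and support_subset: "S \<subseteq> Lobachevsky"
    and vanishes_outside: "\<And>z. z \<notin> S \<Longrightarrow> f z = 0"
    and has_derivative_f: "\<And>z. (f has_derivative f' z) (at z)"
    and continuous_partial: "\<And>v. continuous_on UNIV (\<lambda>z. f' z v)"
begin

lemma closed_support: "closed S"
  using compact_support by (rule compact_imp_closed)

lemma continuous_f: "continuous_on UNIV f"
  using has_derivative_f
  by (meson continuous_on_eq_continuous_within has_derivative_continuous has_derivative_at_withinI)

lemma partial_vanishes_outside: "z \<notin> S \<Longrightarrow> f' z v = 0"
  using has_derivative_unique[OF has_derivative_f
      has_derivative_vanishing_outside[OF closed_support vanishes_outside]]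
  by metis

lemma zero_off_Lobachevsky:
  assumes "z \<notin> Lobachevsky"
  shows "f z = 0" "f' z v = 0"
  using assms support_subset vanishes_outside partial_vanishes_outside by auto

lemma has_vector_derivative_directional:
  "((\<lambda>t. f (z + of_real t * v)) has_vector_derivative f' z v) (at 0)"
proof -
  have "((\<lambda>t. z + of_real t * v) has_derivative (\<lambda>t. of_real t * v)) (at 0)"
    by (auto intro!: derivative_eq_intros)
  from has_derivative_compose[OF this has_derivative_f]
  have "((\<lambda>t. f (z + of_real t * v)) has_derivative (\<lambda>t. f' z (of_real t * v))) (at 0)"
    by simp
  moreover have "f' z (of_real t * v) = t *\<^sub>R f' z v" for t
    using linear_scale[OF has_derivative_linear[OF has_derivative_f]] by (simp add: scaleR_conv_of_real)
  ultimately show ?thesis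
    unfolding has_vector_derivative_def by simp
qed

lemma d_a_eq: "d_a f z = f' z 1"
  unfolding d_a_def using has_vector_derivative_directional[of z 1] by (simp add: vector_derivative_at)

lemma d_b_eq: "d_b f z = f' z \<i>"
  unfolding d_b_def using has_vector_derivative_directional[of z \<i>]
  by (simp add: vector_derivative_at mult.commute)

lemma continuous_on_kernel_mult:
  "continuous_on Lobachevsky L \<Longrightarrow> continuous_on UNIV (\<lambda>z. L z * f z)"
  using open_Lobachevsky closed_support support_subset _ continuous_f vanishes_outside
  by (rule continuous_on_UNIV_mult_vanishing_outside)

lemma continuous_on_kernel_mult_partial:
  "continuous_on Lobachevsky M \<Longrightarrow> continuous_on UNIV (\<lambda>z. M z * f' z v)"
  using open_Lobachevsky closed_support support_subset _ continuous_partial partial_vanishes_outside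
  by (rule continuous_on_UNIV_mult_vanishing_outside)

lemma integrable_kernel_mult:
  assumes "continuous_on Lobachevsky L"
  shows "(\<lambda>z. L z * f z) integrable_on UNIV"
  using continuous_on_kernel_mult[OF assms] compact_support
  by (rule integrable_on_UNIV_compact_support) (simp add: vanishes_outside)

lemma integrable_kernel_mult_partial:
  assumes "continuous_on Lobachevsky M"
  shows "(\<lambda>z. M z * f' z v) integrable_on UNIV"
  using continuous_on_kernel_mult_partial[OF assms] compact_support
  by (rule integrable_on_UNIV_compact_support) (simp add: partial_vanishes_outside)

lemma has_integral_transpose_partial:
  assumes M: "continuous_on Lobachevsky M" and dM: "continuous_on Lobachevsky dM"
    and M': "\<And>z. z \<in> Lobachevsky \<Longrightarrow> ((\<lambda>t. M (z + of_real t * v)) has_vector_derivative dM z) (at 0)"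
    and I: "((\<lambda>z. M z * f' z v) has_integral I) UNIV"
  shows "((\<lambda>z. dM z * f z) has_integral - I) UNIV"
proof -
  have "((\<lambda>z. dM z * f z + M z * f' z v) has_integral 0) UNIV"
  proof (rule has_integral_directional_derivative_eq_0[OF compact_support])
    show "M z * f z = 0" if "z \<notin> S" for z
      using vanishes_outside[OF that] by simp
    show "continuous_on UNIV (\<lambda>z. M z * f z)"
      using M by (rule continuous_on_kernel_mult)
    show "continuous_on UNIV (\<lambda>z. dM z * f z + M z * f' z v)"
      using continuous_on_kernel_mult[OF dM] continuous_on_kernel_mult_partial[OF M]
      by (rule continuous_on_add)
    show "((\<lambda>t. M (z + t *\<^sub>R v) * f (z + t *\<^sub>R v)) has_vector_derivative dM z * f z + M z * f' z v) (at 0)"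
      for z
    proof (cases "z \<in> S")
      case True
      then have z: "z \<in> Lobachevsky"
        using support_subset by auto
      show ?thesis
        using has_vector_derivative_mult[OF M'[OF z] has_vector_derivative_directional[of z v]]
        by (simp add: scaleR_conv_of_real algebra_simps)
    next
      case False
      have "M w * f w = 0" if "w \<notin> S" for w
        using vanishes_outside[OF that] by simp
      from has_vector_derivative_line_vanishing_outside[where G = "\<lambda>w. M w * f w", OF closed_support this False]
      show ?thesis
        using vanishes_outside[OF False] partial_vanishes_outside[OF False] by simp
    qed
  qed
  from has_integral_diff[OF this I] show ?thesis
    by simp
qed

lemma has_integral_transpose_partial_kernel:
  fixes m m' dP :: "complex \<Rightarrow> real" and s v :: complex
  assumes m: "continuous_on Lobachevsky m" and m'c: "continuous_on Lobachevsky m'"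
    and dPc: "continuous_on Lobachevsky dP"
    and m': "\<And>z. z \<in> Lobachevsky \<Longrightarrow> ((\<lambda>t. m (z + of_real t * v)) has_real_derivative m' z) (at 0)"
    and dP: "\<And>z. z \<in> Lobachevsky \<Longrightarrow> ((\<lambda>t. lob_base (z + of_real t * v) x) has_real_derivative dP z) (at 0)"
    and I: "((\<lambda>z. of_real (m z) * of_real (lob_base z x) powr s * f' z v) has_integral I) UNIV"
  shows "((\<lambda>z. (of_real (m' z) * of_real (lob_base z x) powr s
      + s * of_real (m z) * of_real (lob_base z x) powr (s - 1) * of_real (dP z)) * f z) has_integral - I) UNIV"
proof (rule has_integral_transpose_partial[OF _ _ _ I])
  have P: "continuous_on Lobachevsky (\<lambda>z. of_real (lob_base z x) powr r)" for r :: complex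
    by (rule continuous_on_slice[OF continuous_on_lob_base_powr])
  show "continuous_on Lobachevsky (\<lambda>z. of_real (m z) * of_real (lob_base z x) powr s)"
    by (intro continuous_intros m P)
  show "continuous_on Lobachevsky (\<lambda>z. of_real (m' z) * of_real (lob_base z x) powr s
      + s * of_real (m z) * of_real (lob_base z x) powr (s - 1) * of_real (dP z))"
    by (intro continuous_intros m m'c dPc P)
  show "((\<lambda>t. of_real (m (z + of_real t * v)) * of_real (lob_base (z + of_real t * v) x) powr s)
      has_vector_derivative of_real (m' z) * of_real (lob_base z x) powr s
        + s * of_real (m z) * of_real (lob_base z x) powr (s - 1) * of_real (dP z)) (at 0)"
    if "z \<in> Lobachevsky" for z
    using has_vector_derivative_mult[OF has_vector_derivative_of_real[OF m'[OF that]]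
        has_vector_derivative_powr_of_real[OF dP[OF that], of s]] lob_base_pos[of z x] that
    by (simp add: Lobachevsky_def algebra_simps)
qed

lemma has_vector_derivative_integral_kernel:
  assumes L': "\<And>y z. z \<in> Lobachevsky \<Longrightarrow> ((\<lambda>y. L y z) has_vector_derivative L' y z) (at y)"
    and L: "continuous_on (UNIV \<times> Lobachevsky) (\<lambda>(y, z). L y z)"
    and L'c: "continuous_on (UNIV \<times> Lobachevsky) (\<lambda>(y, z). L' y z)"
  shows "((\<lambda>y. integral UNIV (\<lambda>z. L y z * f z)) has_vector_derivative integral UNIV (\<lambda>z. L' y z * f z))
    (at y)"
proof (rule has_vector_derivative_integral_compact_support[OF compact_support])
  show "((\<lambda>y. L y z * f z) has_vector_derivative L' y z * f z) (at y)" for y z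
  proof (cases "z \<in> Lobachevsky")
    case True
    then show ?thesis
      by (intro has_vector_derivative_mult_left L')
  qed (simp add: zero_off_Lobachevsky)
  show "continuous_on UNIV (\<lambda>z. L y z * f z)" for y
    by (rule continuous_on_kernel_mult[OF continuous_on_slice[OF L]])
  show "continuous_on UNIV (\<lambda>(y, z). L' y z * f z)"
    unfolding split_beta
  proof (rule continuous_on_UNIV_mult_vanishing_outside[of "UNIV \<times> Lobachevsky" "UNIV \<times> S"])
    show "continuous_on UNIV (\<lambda>p::real \<times> complex. f (snd p))"
      by (rule continuous_on_compose2[OF continuous_f]) (auto intro!: continuous_intros)
  qed (use L'c open_Lobachevsky closed_support support_subset vanishes_outside in
      \<open>force simp: open_Times closed_Times split_beta\<close>)+
qed (use vanishes_outside in simp)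

lemma has_integral_kernel:
  "((\<lambda>z. lob_kernel s z x * f z) has_integral fourierJ f s x) UNIV"
  using continuous_f compact_support support_subset vanishes_outside by (rule has_integral_fourierJ)

lemma has_integral_kernel_dx:
  "((\<lambda>z. lob_kernel_dx s z x * f z) has_integral dx (fourierJ f) s x) UNIV"
proof -
  have J: "fourierJ f s y = integral UNIV (\<lambda>z. lob_kernel s z y * f z)" for y
    using has_integral_kernel by (rule integral_unique[symmetric])
  have "((\<lambda>y. fourierJ f s y) has_vector_derivative integral UNIV (\<lambda>z. lob_kernel_dx s z x * f z)) (at x)"
    unfolding J
    by (rule has_vector_derivative_integral_kernel[OF _ continuous_on_lob_kernel(1,2)])
      (simp add: Lobachevsky_def has_vector_derivative_lob_kernel)
  then have "dx (fourierJ f) s x = integral UNIV (\<lambda>z. lob_kernel_dx s z x * f z)"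
    unfolding dx_def by (rule vector_derivative_at)
  then show ?thesis
    using integrable_kernel_mult[OF continuous_on_slice[OF continuous_on_lob_kernel(2)]]
    by (simp add: integrable_integral)
qed

lemma has_integral_kernel_dxx:
  "((\<lambda>z. lob_kernel_dxx s z x * f z) has_integral dx (dx (fourierJ f)) s x) UNIV"
proof -
  have J': "dx (fourierJ f) s y = integral UNIV (\<lambda>z. lob_kernel_dx s z y * f z)" for y
    using has_integral_kernel_dx by (rule integral_unique[symmetric])
  have "((\<lambda>y. dx (fourierJ f) s y) has_vector_derivative integral UNIV (\<lambda>z. lob_kernel_dxx s z x * f z)) (at x)"
    unfolding J'
    by (rule has_vector_derivative_integral_kernel[OF _ continuous_on_lob_kernel(2,3)])
      (simp add: Lobachevsky_def has_vector_derivative_lob_kernel_dx)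
  then have "dx (dx (fourierJ f)) s x = integral UNIV (\<lambda>z. lob_kernel_dxx s z x * f z)"
    unfolding dx_def[of "dx _"] by (rule vector_derivative_at)
  then show ?thesis
    using integrable_kernel_mult[OF continuous_on_slice[OF continuous_on_lob_kernel(3)]]
    by (simp add: integrable_integral)
qed

lemma fourierJ_vector_field:
  assumes "continuous_on UNIV \<phi>"
  shows "fourierJ (\<lambda>z. \<phi> z * wirt_z f z - cnj (\<phi> z) * wirt_zbar f z) \<tau> x =
    \<i> * integral UNIV (\<lambda>z. of_real (Im (\<phi> z) / (4 * (Im z)\<^sup>2)) * of_real (lob_base z x) powr \<tau> * f' z 1
      + of_real (- Re (\<phi> z) / (4 * (Im z)\<^sup>2)) * of_real (lob_base z x) powr \<tau> * f' z \<i>)"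
    (is "fourierJ ?h \<tau> x = \<i> * integral UNIV ?G")
proof -
  have h: "?h z = \<i> * (of_real (Im (\<phi> z)) * f' z 1 - of_real (Re (\<phi> z)) * f' z \<i>)" for z
    by (simp add: wirtinger_combination d_a_eq d_b_eq)
  have "((\<lambda>z. lob_kernel \<tau> z x * ?h z) has_integral fourierJ ?h \<tau> x) UNIV"
    using _ compact_support support_subset
  proof (rule has_integral_fourierJ)
    show "continuous_on UNIV ?h"
      unfolding h by (intro continuous_intros continuous_partial assms)
  qed (simp add: h partial_vanishes_outside)
  moreover have "lob_kernel \<tau> z x * ?h z = \<i> * ?G z" for z
  proof (cases "z \<in> Lobachevsky")
    case True
    then show ?thesis
      unfolding h by (simp add: lob_kernel_def Lobachevsky_def field_simps)
  qed (simp add: h zero_off_Lobachevsky)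
  ultimately have "((\<lambda>z. \<i> * ?G z) has_integral fourierJ ?h \<tau> x) UNIV"
    by simp
  then have "integral UNIV (\<lambda>z. \<i> * ?G z) = fourierJ ?h \<tau> x"
    by (rule integral_unique)
  then show ?thesis
    by simp
qed

lemma has_integral_transpose_field:
  fixes ma mb ma' mb' :: "complex \<Rightarrow> real" and \<tau> :: complex
  assumes cont: "continuous_on Lobachevsky ma" "continuous_on Lobachevsky mb"
      "continuous_on Lobachevsky ma'" "continuous_on Lobachevsky mb'"
    and ma': "\<And>z. z \<in> Lobachevsky \<Longrightarrow> ((\<lambda>t. ma (z + of_real t)) has_real_derivative ma' z) (at 0)"
    and mb': "\<And>z. z \<in> Lobachevsky \<Longrightarrow> ((\<lambda>t. mb (z + of_real t * \<i>)) has_real_derivative mb' z) (at 0)"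
  shows "((\<lambda>z. ((of_real (ma' z) * of_real (lob_base z x) powr \<tau>
          + \<tau> * of_real (ma z) * of_real (lob_base z x) powr (\<tau> - 1) * of_real (- 2 * (x - Re z) / Im z))
        + (of_real (mb' z) * of_real (lob_base z x) powr \<tau>
          + \<tau> * of_real (mb z) * of_real (lob_base z x) powr (\<tau> - 1) * of_real (1 - ((x - Re z) / Im z)\<^sup>2)))
      * f z) has_integral
    - integral UNIV (\<lambda>z. of_real (ma z) * of_real (lob_base z x) powr \<tau> * f' z 1
        + of_real (mb z) * of_real (lob_base z x) powr \<tau> * f' z \<i>)) UNIV"
    (is "((\<lambda>z. (?Da z + ?Db z) * f z) has_integral - integral UNIV (\<lambda>z. ?Ma z * f' z 1 + ?Mb z * f' z \<i>))
      UNIV")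
proof -
  have P: "continuous_on Lobachevsky (\<lambda>z. of_real (lob_base z x) powr \<tau>)"
    by (rule continuous_on_slice[OF continuous_on_lob_base_powr])
  have "continuous_on Lobachevsky ?Ma" "continuous_on Lobachevsky ?Mb"
    by (intro continuous_intros cont P)+
  then obtain Ia Ib where Ia: "((\<lambda>z. ?Ma z * f' z 1) has_integral Ia) UNIV"
    and Ib: "((\<lambda>z. ?Mb z * f' z \<i>) has_integral Ib) UNIV"
    using integrable_kernel_mult_partial unfolding integrable_on_def by meson
  have "((\<lambda>z. ?Da z * f z) has_integral - Ia) UNIV"
    using cont(1,3) _ _ _ Ia
  proof (rule has_integral_transpose_partial_kernel)
    show "continuous_on Lobachevsky (\<lambda>z. - 2 * (x - Re z) / Im z)"
      by (intro continuous_intros) (auto simp: Lobachevsky_def)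
  qed (use ma' lob_base_has_real_derivative_Re in \<open>auto simp: Lobachevsky_def\<close>)
  moreover have "((\<lambda>z. ?Db z * f z) has_integral - Ib) UNIV"
    using cont(2,4) _ _ _ Ib
  proof (rule has_integral_transpose_partial_kernel)
    show "continuous_on Lobachevsky (\<lambda>z. 1 - ((x - Re z) / Im z)\<^sup>2)"
      by (intro continuous_intros) (auto simp: Lobachevsky_def)
  qed (use mb' lob_base_has_real_derivative_Im in \<open>auto simp: Lobachevsky_def\<close>)
  ultimately have "((\<lambda>z. (?Da z + ?Db z) * f z) has_integral - Ia + - Ib) UNIV"
    by (rule has_integral_kernel_add)
  then show ?thesis
    using integral_unique[OF has_integral_add[OF Ia Ib]] by simp
qed

lemma fourierJ_div_z_minus_cnj:
  assumes "\<tau> \<noteq> -1" "\<tau> \<noteq> -1/2"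
  shows "fourierJ (\<lambda>z. f z / (z - cnj z)) \<tau> x =
    1 / (4 * \<i> * (1 + \<tau>) * (1 + 2 * \<tau>)) * dx (dx (Tplus (fourierJ f))) \<tau> x
    - 2 * \<i> * \<tau> / (2 * (1 + 2 * \<tau>)) * Tminus (fourierJ f) \<tau> x"
    (is "?lhs = ?rhs")
proof -
  define R where "R z = 1 / (4 * \<i> * (1 + \<tau>) * (1 + 2 * \<tau>)) * lob_kernel_dxx (\<tau> + 1) z x
    - 2 * \<i> * \<tau> / (2 * (1 + 2 * \<tau>)) * lob_kernel (\<tau> - 1) z x" for z
  have "continuous_on Lobachevsky (\<lambda>z. 1 / (z - cnj z))"
    by (intro continuous_intros) (auto simp: Lobachevsky_def complex_eq_iff)
  then have "((\<lambda>z. lob_kernel \<tau> z x * (f z / (z - cnj z))) has_integral ?lhs) UNIV"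
    using compact_support support_subset vanishes_outside
    by (intro has_integral_fourierJ) (auto dest: continuous_on_kernel_mult)
  moreover have "lob_kernel \<tau> z x * (f z / (z - cnj z)) = R z * f z" for z
  proof (cases "z \<in> Lobachevsky")
    case True
    then have "Im z > 0"
      by (simp add: Lobachevsky_def)
    have "lob_kernel \<tau> z x * (f z / (z - cnj z)) = lob_kernel \<tau> z x / (z - cnj z) * f z"
      by simp
    also have "\<dots> = R z * f z"
      unfolding R_def by (simp only: lob_kernel_div_z_minus_cnj[OF \<open>Im z > 0\<close> assms])
    finally show ?thesis .
  qed (simp add: zero_off_Lobachevsky)
  moreover have "((\<lambda>z. R z * f z) has_integral ?rhs) UNIV"
    unfolding R_def dx_Tplus Tplus_def Tminus_def
    by (intro has_integral_kernel_diff has_integral_kernel_scale has_integral_kernel has_integral_kernel_dxx)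
  ultimately show ?thesis
    using has_integral_unique by simp
qed

lemma fourierJ_quadratic_vector_field:
  fixes \<alpha> \<beta> \<gamma> :: real
  defines "\<phi> \<equiv> \<lambda>w. of_real \<alpha> + of_real \<beta> * w + of_real \<gamma> * w\<^sup>2"
  assumes \<tau>: "\<tau> \<noteq> -1" "\<tau> \<noteq> -1/2"
  shows "fourierJ (\<lambda>z. \<phi> z * wirt_z f z - cnj (\<phi> z) * wirt_zbar f z) \<tau> x =
      (2 + \<tau>) / (2 * \<i> * (1 + \<tau>) * (1 + 2 * \<tau>)) * \<phi> (of_real x) * dx (dx (Tplus (fourierJ f))) \<tau> x
      - (2 + \<tau>) / (2 * \<i> * (1 + \<tau>)) * (of_real \<beta> + 2 * of_real \<gamma> * of_real x) * dx (Tplus (fourierJ f)) \<tau> x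
      + (2 + \<tau>) / (2 * \<i>) * (2 * of_real \<gamma>) * Tplus (fourierJ f) \<tau> x
      + 2 * \<i> * \<tau> * (-1 + \<tau>) / (1 + 2 * \<tau>) * \<phi> (of_real x) * Tminus (fourierJ f) \<tau> x"
    (is "?lhs = ?rhs")
proof -
  define G where "G z = of_real (Im (\<phi> z) / (4 * (Im z)\<^sup>2)) * of_real (lob_base z x) powr \<tau> * f' z 1
    + of_real (- Re (\<phi> z) / (4 * (Im z)\<^sup>2)) * of_real (lob_base z x) powr \<tau> * f' z \<i>" for z
  define D where "D z = (of_real (\<gamma> / (2 * Im z)) * of_real (lob_base z x) powr \<tau>
      + \<tau> * of_real (Im (\<phi> z) / (4 * (Im z)\<^sup>2)) * of_real (lob_base z x) powr (\<tau> - 1)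
        * of_real (- 2 * (x - Re z) / Im z))
    + (of_real ((\<alpha> + \<beta> * Re z + \<gamma> * (Re z)\<^sup>2) / (2 * (Im z) ^ 3)) * of_real (lob_base z x) powr \<tau>
      + \<tau> * of_real (- Re (\<phi> z) / (4 * (Im z)\<^sup>2)) * of_real (lob_base z x) powr (\<tau> - 1)
        * of_real (1 - ((x - Re z) / Im z)\<^sup>2))" for z
  define R where "R z = (2 + \<tau>) / (2 * \<i> * (1 + \<tau>) * (1 + 2 * \<tau>)) * \<phi> (of_real x) * lob_kernel_dxx (\<tau> + 1) z x
      - (2 + \<tau>) / (2 * \<i> * (1 + \<tau>)) * (of_real \<beta> + 2 * of_real \<gamma> * of_real x) * lob_kernel_dx (\<tau> + 1) z x
      + (2 + \<tau>) / (2 * \<i>) * (2 * of_real \<gamma>) * lob_kernel (\<tau> + 1) z x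
      + 2 * \<i> * \<tau> * (-1 + \<tau>) / (1 + 2 * \<tau>) * \<phi> (of_real x) * lob_kernel (\<tau> - 1) z x" for z
  have lhs: "?lhs = \<i> * integral UNIV G"
    unfolding G_def by (rule fourierJ_vector_field) (unfold \<phi>_def, intro continuous_intros)
  have "((\<lambda>z. D z * f z) has_integral - integral UNIV G) UNIV"
    unfolding D_def G_def
    by (rule has_integral_transpose_field)
      (auto intro!: continuous_intros derivative_eq_intros
        simp: \<phi>_def Lobachevsky_def power2_eq_square power3_eq_cube field_simps)
  then have "((\<lambda>z. (- \<i> * D z) * f z) has_integral (- \<i>) * (- integral UNIV G)) UNIV"
    by (rule has_integral_kernel_scale)
  moreover have "(\<lambda>z. (- \<i> * D z) * f z) = (\<lambda>z. R z * f z)"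
  proof
    fix z
    show "(- \<i> * D z) * f z = R z * f z"
    proof (cases "z \<in> Lobachevsky")
      case True
      then have "Im z > 0"
        by (simp add: Lobachevsky_def)
      then show ?thesis
        unfolding D_def R_def \<phi>_def
        by (simp only: lob_kernel_quadratic_field[where \<alpha>=\<alpha> and \<beta>=\<beta> and \<gamma>=\<gamma> and x=x and z=z,
              OF _ \<tau>])
    qed (simp add: zero_off_Lobachevsky)
  qed
  ultimately have "((\<lambda>z. R z * f z) has_integral \<i> * integral UNIV G) UNIV"
    by simp
  moreover have "((\<lambda>z. R z * f z) has_integral ?rhs) UNIV"
    unfolding R_def dx_Tplus Tplus_def Tminus_def
    by (intro has_integral_kernel_add has_integral_kernel_diff has_integral_kernel_scale
        has_integral_kernel has_integral_kernel_dx has_integral_kernel_dxx)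
  ultimately show ?thesis
    using lhs has_integral_unique by simp
qed

end

lemma linear_complex_expand:
  fixes L :: "complex \<Rightarrow> 'a::real_vector"
  assumes "linear L"
  shows "L v = Re v *\<^sub>R L 1 + Im v *\<^sub>R L \<i>"
proof -
  have "v = Re v *\<^sub>R 1 + Im v *\<^sub>R \<i>"
    by (simp add: complex_eq_iff)
  then show ?thesis
    by (metis assms linear_add linear_scale)
qed

lemma smooth_on_imp_continuous: "smooth_on A g \<Longrightarrow> continuous_on A g"
  by (erule smooth_on.cases) blast

lemma smooth_on_imp_continuous_partials:
  assumes "smooth_on A g"
  obtains D where "\<And>z. z \<in> A \<Longrightarrow> (g has_derivative D z) (at z)"
    "continuous_on A (\<lambda>z. D z 1)" "continuous_on A (\<lambda>z. D z \<i>)"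
  using assms
proof cases
  case (1 D)
  then show ?thesis
    using that[of D] smooth_on_imp_continuous by blast
qed

lemma Cc_inf_Lob_imp_test_function:
  assumes "Cc_inf_Lob f"
  obtains S f' where "lob_test_function f S f'"
proof -
  define S where "S = closure {z. f z \<noteq> 0}"
  have S: "compact S" "S \<subseteq> Lobachevsky" "closed S"
    using assms by (auto simp: Cc_inf_Lob_def S_def)
  have f0: "f z = 0" if "z \<notin> S" for z
    using that closure_subset by (force simp: S_def)
  obtain D where D: "\<And>z. z \<in> Lobachevsky \<Longrightarrow> (f has_derivative D z) (at z)"
    and Dc: "continuous_on Lobachevsky (\<lambda>z. D z 1)" "continuous_on Lobachevsky (\<lambda>z. D z \<i>)"
    using assms unfolding Cc_inf_Lob_def by (metis smooth_on_imp_continuous_partials)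
  define f' where "f' z = (if z \<in> S then D z else (\<lambda>_. 0))" for z
  have f': "(f has_derivative f' z) (at z)" for z
    using D S has_derivative_vanishing_outside[OF S(3) f0] by (auto simp: f'_def)
  have "D z = (\<lambda>_. 0)" if "z \<in> Lobachevsky" "z \<notin> S" for z
    using has_derivative_unique[OF D has_derivative_vanishing_outside[OF S(3) f0]] that by blast
  then have cont: "continuous_on UNIV (\<lambda>z. f' z 1)" "continuous_on UNIV (\<lambda>z. f' z \<i>)"
    using S Dc
    by (intro continuous_on_UNIV_vanishing_outside[OF open_Lobachevsky S(3) S(2)];
        auto simp: f'_def intro: continuous_on_eq)+
  have "continuous_on UNIV (\<lambda>z. f' z v)" for v
    unfolding linear_complex_expand[OF has_derivative_linear[OF f'], of _ v]
    by (intro continuous_intros cont)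
  then have "lob_test_function f S f'"
    using S f0 f' by unfold_locales
  then show ?thesis ..
qed

theorem theorem1:
  fixes f :: "complex \<Rightarrow> complex" and \<tau> :: complex and x :: real
  assumes "Cc_inf_Lob f" and "\<tau> \<noteq> -1" and "\<tau> \<noteq> -1/2"
  shows
   "(fourierJ (\<lambda>z. f z / (z - cnj z)) \<tau> x =
      1 / (4 * \<i> * (1 + \<tau>) * (1 + 2 * \<tau>)) * dx (dx (Tplus (fourierJ f))) \<tau> x
      - 2 * \<i> * \<tau> / (2 * (1 + 2 * \<tau>)) * Tminus (fourierJ f) \<tau> x)
   \<and> (fourierJ (\<lambda>z. wirt_z f z - wirt_zbar f z) \<tau> x =
      (2 + \<tau>) / (2 * \<i> * (1 + \<tau>) * (1 + 2 * \<tau>)) * dx (dx (Tplus (fourierJ f))) \<tau> x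
      + 2 * \<i> * \<tau> * (-1 + \<tau>) / (1 + 2 * \<tau>) * Tminus (fourierJ f) \<tau> x)
   \<and> (fourierJ (\<lambda>z. z * wirt_z f z - cnj z * wirt_zbar f z) \<tau> x =
      (2 + \<tau>) / (2 * \<i> * (1 + \<tau>) * (1 + 2 * \<tau>)) * of_real x
          * dx (dx (Tplus (fourierJ f))) \<tau> x
      - (2 + \<tau>) / (2 * \<i> * (1 + \<tau>)) * dx (Tplus (fourierJ f)) \<tau> x
      + 2 * \<i> * (-1 + \<tau>) * \<tau> / (1 + 2 * \<tau>) * of_real x * Tminus (fourierJ f) \<tau> x)
   \<and> (fourierJ (\<lambda>z. z\<^sup>2 * wirt_z f z - (cnj z)\<^sup>2 * wirt_zbar f z) \<tau> x =
      (2 + \<tau>) / (2 * \<i> * (1 + \<tau>) * (1 + 2 * \<tau>)) * (of_real x)\<^sup>2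
          * dx (dx (Tplus (fourierJ f))) \<tau> x
      - 2 * (2 + \<tau>) / (2 * \<i> * (1 + \<tau>)) * of_real x * dx (Tplus (fourierJ f)) \<tau> x
      + 2 * (2 + \<tau>) / (2 * \<i>) * Tplus (fourierJ f) \<tau> x
      + 2 * \<i> * \<tau> * (-1 + \<tau>) / (1 + 2 * \<tau>) * (of_real x)\<^sup>2 * Tminus (fourierJ f) \<tau> x)"
proof -
  obtain S f' where "lob_test_function f S f'"
    using Cc_inf_Lob_imp_test_function[OF assms(1)] .
  then interpret lob_test_function f S f' .
  note field = fourierJ_quadratic_vector_field[OF assms(2,3)]
  show ?thesis
    using fourierJ_div_z_minus_cnj[OF assms(2,3)] field[of 1 0 0] field[of 0 1 0] field[of 0 0 1]
    by (simp add: mult_ac)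
qed

end
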